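(* Let $G$ be a finite alphabet and $p:G\times G^{-\mathbf{N}^*}\to[0,1]$ a kernel. Let $\mathcal{G}$ be the oriented graph with vertex set $G$ and arc set $\mathcal{A}=\{(w,g)\in G^2:a_1(g|w)>0\}$. Suppose (i) $\sum_{n=1}^\infty\prod_{m=1}^n a_m=\infty$; (ii) $\mathcal{G}$ has a single irreducible class, which is aperiodic; (iii) for every $g\in G$ there exists $w\in G$ with $(w,g)\notin\mathcal{A}$. Then there exists (and one can construct) a backward coalescence time for the coupling function $\hat f$ defined below.
   Context: Histories $\mathbf{w}=(w_{-1},w_{-2},\dots)\in G^{-\mathbf{N}^*}$; the kernel $p(g|\mathbf{w})$ is measurable in $\mathbf{w}$ and sums to 1 over $g$. Admissible histories $\mathcal{H}$: a letter $g$ is forbidden if $p(g|\mathbf{w})=0$ for all $\mathbf{w}$; a word $(s_0,\dots,s_{-n})$ is forbidden if $(s_{-1},\dots,s_{-n})$ is forbidden or $p(s_0|\mathbf{w})=0$ for all histories beginning with $(s_{-1},\dots,s_{-n})$; $\mathbf{w}\in\mathcal{H}$ iff no initial word $(w_{-1},\dots,w_{-n})$ is forbidden. $a_0(g)=\inf\{p(g|\mathbf{z}):\mathbf{z}\in\mathcal{H}\}$; for $k\ge1$, $a_k(g|w_{-1},\dots,w_{-k})=\inf\{p(g|\mathbf{z}):\mathbf{z}\in\mathcal{H},(z_{-1},\dots,z_{-k})=(w_{-1},\dots,w_{-k})\}$ (so $a_1(g|w)=\inf\{p(g|\mathbf{z}):\mathbf{z}\in\mathcal{H},z_{-1}=w\}$);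 $b_k=a_k-a_{k-1}$ ($a_{-1}\equiv0$); $a_k(w_{-1},\dots,w_{-k})=\sum_ga_k(g|\cdot)$; $a_k=\inf_{\mathbf{w}\in\mathcal{H}}a_k(w_{-1},\dots,w_{-k})$. The maximal coupling function $f:[0,1)\times\mathcal{H}\to G$ partitions each $[a_{k-1}(w_{-1},\dots,w_{-k+1}),a_k(w_{-1},\dots,w_{-k}))$ into intervals $B_k(g|w_{-1},\dots,w_{-k})$ of length $b_k(g|\cdot)$ and sets $f(u|\mathbf{w})=g$ on $\bigcup_kB_k(g|\cdot)$. Modified function $\bar f:[0,1)\times\mathcal{H}\to G$: $\bar f(u|\mathbf{w})=f(u|\mathbf{w})$ for $u\ge a_1(w_{-1})$, while on $[0,a_1(w_{-1}))$ each $B_1(h|w_{-1})$ is replaced by a union of two disjoint intervals $B^1_1(h|w_{-1}),B^2_1(h|w_{-1})$ on which $\bar f(\cdot|\mathbf{w})=h$, with $|B^1_1(h|w_{-1})|+|B^2_1(h|w_{-1})|=|B_1(h|w_{-1})|=a_1(h|w_{-1})$ and $B^1_1(h|w_{-1})$ intersecting $[0,a_1)$; consequently the Markov kernel $\bar M(g|w)=|\{u\in[0,1):\bar f(a_1u|\mathbf{w})=g\}|$ ($\mathbf{w}\in\mathcal{H}$, $w_{-1}=w$) satisfies $\bar M(g|w)>0\iff a_1(g|w)>0$. $\hat f:[0,1)^{|G|+1}\times\mathcal{H}\to G$ is $\hat f(u^0;u^g,g\in G|\mathbf{w})=\bar f(u^0|\mathbf{w})$ if $u^0\ge a_1$, and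 $=\bar f(a_1u^{w_{-1}}|\mathbf{w})$ if $u^0<a_1$. It is a coupling function for $p$ in the sense that for a uniform random vector $V$ on $[0,1)^{|G|+1}$, $P(\hat f(V|\mathbf{w})=g)=p(g|\mathbf{w})$ for all $\mathbf{w}\in\mathcal{H}$. Iterates: $\hat f^{(1)}=\hat f$, $\hat f^{(n+1)}(v_n,\dots,v_0|\mathbf{w})=\hat f(v_n|\hat f^{(n)}(v_{n-1},\dots,v_0|\mathbf{w}),\dots,\hat f^{(1)}(v_0|\mathbf{w}),\mathbf{w})$. Let $\{V_i,i\in\mathbf{Z}\}$ be i.i.d. uniform on $[0,1)^{|G|+1}$, $\mathcal{F}^n_m=\sigma(V_i,m\le i\le n)$, and fix $\mathbf{g}\in\mathcal{H}$. A backward coalescence time for $\hat f$ is a measurable $\tau_0=\tau_0(V_0,V_{-1},\dots)$ with non-positive integer values such that (H1) $-\tau_0$ is an a.s. finite stopping time w.r.t. $\{\mathcal{F}^0_{-n}\}_{n\in\mathbf{N}}$; (H2) on $\{\tau_0=-l\}$, $\hat f^{(l+1)}(V_0,\dots,V_{-l}|\mathbf{w})=\hat f^{(l+1)}(V_0,\dots,V_{-l}|\mathbf{g})$ for all $\mathbf{w}\in\mathcal{H}$. "Single irreducible class" refers to the communicating-class structure of the directed graph $\mathcal{G}$ (as for the Markov chain with support graph $\mathcal{G}$). *)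

theory Defs
  imports "HOL-Probability.Probability"
begin

(* A history w = (w_{-1}, w_{-2}, ...) is represented as  w :: nat => 'g  with  w i = w_{-(i+1)}.
   A kernel p(g|w) is represented as  p g w. *)

type_synonym 'g hist = "nat \<Rightarrow> 'g"

(* Forbidden words.  The word (s_0, s_{-1}, ..., s_{-n}) is the list [s_0, s_{-1}, ..., s_{-n}]. *)
fun forbidden :: "('g \<Rightarrow> 'g hist \<Rightarrow> real) \<Rightarrow> 'g list \<Rightarrow> bool" where
  "forbidden p [] = False"
| "forbidden p [g] = (\<forall>w. p g w = 0)"
| "forbidden p (s0 # s1 # ss) =
     (forbidden p (s1 # ss) \<or>
      (\<forall>w. (\<forall>i < length (s1 # ss). w i = (s1 # ss) ! i) \<longrightarrow> p s0 w = 0))"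

definition admissible :: "('g \<Rightarrow> 'g hist \<Rightarrow> real) \<Rightarrow> 'g hist set" where
  "admissible p = {w. \<forall>n\<ge>1. \<not> forbidden p (map w [0..<n])}"

(* a_k(g | w_{-1},...,w_{-k}); only w 0 .. w (k-1) matter.  k = 0 gives a_0(g).
   Convention: the infimum over an empty set (a prefix not extendable to an admissible
   history) is 1, the top of [0,1]. *)
definition acond :: "('g \<Rightarrow> 'g hist \<Rightarrow> real) \<Rightarrow> nat \<Rightarrow> 'g \<Rightarrow> 'g hist \<Rightarrow> real" where
  "acond p k g w =
     (let S = {z \<in> admissible p. \<forall>i<k. z i = w i}
      in if S = {} then 1 else (INF z\<in>S. p g z))"

definition bcond :: "('g \<Rightarrow> 'g hist \<Rightarrow> real) \<Rightarrow> nat \<Rightarrow> 'g \<Rightarrow> 'g hist \<Rightarrow> real" where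
  "bcond p k g w = acond p k g w - (if k = 0 then 0 else acond p (k - 1) g w)"

definition atot :: "('g::finite \<Rightarrow> 'g hist \<Rightarrow> real) \<Rightarrow> nat \<Rightarrow> 'g hist \<Rightarrow> real" where
  "atot p k w = (\<Sum>g\<in>UNIV. acond p k g w)"

definition alow :: "('g::finite \<Rightarrow> 'g hist \<Rightarrow> real) \<Rightarrow> nat \<Rightarrow> 'g hist \<Rightarrow> real" where
  "alow p k w = (if k = 0 then 0 else atot p (k - 1) w)"

definition amin :: "('g::finite \<Rightarrow> 'g hist \<Rightarrow> real) \<Rightarrow> nat \<Rightarrow> real" where
  "amin p k = (INF w\<in>admissible p. atot p k w)"

definition arcs :: "('g \<Rightarrow> 'g hist \<Rightarrow> real) \<Rightarrow> ('g \<times> 'g) set" where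
  "arcs p = {(w, g). acond p 1 g (\<lambda>_. w) > 0}"

definition comm_class :: "('a \<times> 'a) set \<Rightarrow> 'a set \<Rightarrow> bool" where
  "comm_class A C \<longleftrightarrow> (\<exists>x. C = {y. (x, y) \<in> A\<^sup>* \<and> (y, x) \<in> A\<^sup>*})"

definition closed_set :: "('a \<times> 'a) set \<Rightarrow> 'a set \<Rightarrow> bool" where
  "closed_set A C \<longleftrightarrow> (\<forall>x\<in>C. \<forall>y. (x, y) \<in> A \<longrightarrow> y \<in> C)"

definition irreducible_class :: "('a \<times> 'a) set \<Rightarrow> 'a set \<Rightarrow> bool" where
  "irreducible_class A C \<longleftrightarrow> comm_class A C \<and> closed_set A C"

definition period :: "('a \<times> 'a) set \<Rightarrow> 'a \<Rightarrow> nat" where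
  "period A x = Gcd {n. n > 0 \<and> (x, x) \<in> A ^^ n}"

definition aperiodic_class :: "('a \<times> 'a) set \<Rightarrow> 'a set \<Rightarrow> bool" where
  "aperiodic_class A C \<longleftrightarrow> (\<forall>x\<in>C. period A x = 1)"

(* Requirements on the modified maximal coupling function fbar (called fb):
   (1) each fb(.|w) is Borel measurable and {u in [0,1). fb(u|w)=g} has length p(g|w)
       (so that fhat is a coupling function);
   (2) for k >= 2 (i.e. u >= a_1(w_{-1}), where fbar = f), [a_{k-1}(w),a_k(w)) is partitioned
       into intervals B_k(g|w_{-1..-k}) of length b_k(g|.), depending only on w_{-1..-k};
   (3) on [0, a_1(w_{-1})) the preimage of h is the union of two disjoint intervals
       B^1_1(h|w_{-1}), B^2_1(h|w_{-1}) of total length a_1(h|w_{-1}), B^1 intersecting [0,a_1). *)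
definition fbar_ok :: "('g::finite \<Rightarrow> 'g hist \<Rightarrow> real) \<Rightarrow> (real \<Rightarrow> 'g hist \<Rightarrow> 'g) \<Rightarrow> bool" where
  "fbar_ok p fb \<longleftrightarrow>
     (\<forall>w\<in>admissible p. \<forall>g. {u. fb u w = g} \<in> sets lborel)
   \<and> (\<forall>w\<in>admissible p. \<forall>g. measure lborel {u\<in>{0..<1}. fb u w = g} = p g w)
   \<and> (\<forall>k\<ge>2. \<forall>w\<in>admissible p. \<forall>g. \<exists>c d. c \<le> d \<and> d - c = bcond p k g w \<and>
          {u\<in>{alow p k w..<atot p k w}. fb u w = g} = {c..<d})
   \<and> (\<forall>k\<ge>2. \<forall>w\<in>admissible p. \<forall>w'\<in>admissible p. (\<forall>i<k. w i = w' i) \<longrightarrow>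
          (\<forall>u\<in>{alow p k w..<atot p k w}. fb u w = fb u w'))
   \<and> (\<exists>c1 d1 c2 d2 :: 'g \<Rightarrow> 'g \<Rightarrow> real. \<forall>w\<in>admissible p. \<forall>h.
          c1 h (w 0) \<le> d1 h (w 0) \<and> c2 h (w 0) \<le> d2 h (w 0)
        \<and> {c1 h (w 0)..<d1 h (w 0)} \<inter> {c2 h (w 0)..<d2 h (w 0)} = {}
        \<and> (d1 h (w 0) - c1 h (w 0)) + (d2 h (w 0) - c2 h (w 0)) = acond p 1 h w
        \<and> {u\<in>{0..<atot p 1 w}. fb u w = h} = {c1 h (w 0)..<d1 h (w 0)} \<union> {c2 h (w 0)..<d2 h (w 0)}
        \<and> (acond p 1 h w > 0 \<longrightarrow> {c1 h (w 0)..<d1 h (w 0)} \<inter> {0..<amin p 1} \<noteq> {}))"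

(* A vector v in [0,1)^{|G|+1}: v None = u^0, v (Some g) = u^g. *)
definition fhat :: "('g::finite \<Rightarrow> 'g hist \<Rightarrow> real) \<Rightarrow> (real \<Rightarrow> 'g hist \<Rightarrow> 'g)
                     \<Rightarrow> ('g option \<Rightarrow> real) \<Rightarrow> 'g hist \<Rightarrow> 'g" where
  "fhat p fb v w = (if amin p 1 \<le> v None then fb (v None) w else fb (amin p 1 * v (Some (w 0))) w)"

definition push :: "'g \<Rightarrow> 'g hist \<Rightarrow> 'g hist" where
  "push x w = (\<lambda>i. case i of 0 \<Rightarrow> x | Suc j \<Rightarrow> w j)"

(* traj vs w n = (fhat^{(n)}(v_{n-1},...,v_0|w), ..., fhat^{(1)}(v_0|w), w) where vs i = v_i *)
primrec traj :: "('g::finite \<Rightarrow> 'g hist \<Rightarrow> real) \<Rightarrow> (real \<Rightarrow> 'g hist \<Rightarrow> 'g)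
                  \<Rightarrow> (nat \<Rightarrow> 'g option \<Rightarrow> real) \<Rightarrow> 'g hist \<Rightarrow> nat \<Rightarrow> 'g hist" where
  "traj p fb vs w 0 = w"
| "traj p fb vs w (Suc n) = push (fhat p fb (vs n) (traj p fb vs w n)) (traj p fb vs w n)"

definition fhat_iter :: "('g::finite \<Rightarrow> 'g hist \<Rightarrow> real) \<Rightarrow> (real \<Rightarrow> 'g hist \<Rightarrow> 'g)
                  \<Rightarrow> nat \<Rightarrow> (nat \<Rightarrow> 'g option \<Rightarrow> real) \<Rightarrow> 'g hist \<Rightarrow> 'g" where
  "fhat_iter p fb n vs w = fhat p fb (vs (n - 1)) (traj p fb vs w (n - 1))"

definition Vmeas :: "('g::finite option \<Rightarrow> real) measure" where
  "Vmeas = PiM UNIV (\<lambda>_. uniform_measure lborel {0..<1::real})"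

(* Canonical space of (V_0, V_{-1}, V_{-2}, ...): omega j = V_{-j}, i.i.d. *)
definition Omega :: "(nat \<Rightarrow> 'g::finite option \<Rightarrow> real) measure" where
  "Omega = PiM UNIV (\<lambda>_. Vmeas)"

definition past_filt :: "nat \<Rightarrow> (nat \<Rightarrow> 'g::finite option \<Rightarrow> real) measure" where
  "past_filt n = vimage_algebra (space Omega) (\<lambda>\<omega>. restrict \<omega> {..n}) (PiM {..n} (\<lambda>_. Vmeas))"

(* T = -tau_0 (values in enat; finite almost surely). *)
definition backward_coalescence_time ::
  "('g::finite \<Rightarrow> 'g hist \<Rightarrow> real) \<Rightarrow> (real \<Rightarrow> 'g hist \<Rightarrow> 'g) \<Rightarrow> 'g hist
     \<Rightarrow> ((nat \<Rightarrow> 'g option \<Rightarrow> real) \<Rightarrow> enat) \<Rightarrow> bool" where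
  "backward_coalescence_time p fb gg T \<longleftrightarrow>
     (\<forall>n::nat. {\<omega> \<in> space Omega. T \<omega> \<le> enat n} \<in> sets (past_filt n))
   \<and> (AE \<omega> in Omega. T \<omega> \<noteq> \<infinity>)
   \<and> (\<forall>l::nat. \<forall>\<omega>\<in>space Omega. T \<omega> = enat l \<longrightarrow>
        (\<forall>w\<in>admissible p.
           fhat_iter p fb (Suc l) (\<lambda>i. \<omega> (l - i)) w = fhat_iter p fb (Suc l) (\<lambda>i. \<omega> (l - i)) gg))"

end

theory Submission
  imports Defs
begin

text \<open>A coalescence event is a window of \<open>M + m\<close> consecutive uniform vectors. In the \<open>M\<close> oldest
  ones, \<open>u\<^sup>0 < a\<^sub>1\<close> and each \<open>u\<^sup>z\<close> lies in an interval on which the modified coupling function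
  follows a fixed arc out of \<open>z\<close>, whatever the rest of the history; since the graph has a
  single aperiodic irreducible class, these arcs can be chosen so that every history is
  steered to one and the same letter \<open>y\<close>. In the \<open>m\<close> newest ones, the \<open>k\<close>-th satisfies
  \<open>u\<^sup>0 < a\<^sub>k\<close>, so it only reads the \<open>k\<close> letters on which all trajectories already agree.
  Such a window has probability \<open>\<delta> a\<^sub>1 \<cdots> a\<^sub>m\<close> with \<open>\<delta> > 0\<close>, so by condition (i) the window
  probabilities have divergent sum, and a renewal argument shows that some window occurs
  almost surely. The first one to occur defines the backward coalescence time.\<close>

section \<open>Numerical semigroups and aperiodic graphs\<close>

lemma add_closed_mult_mem:
  fixes S :: "nat set"
  assumes add: "\<And>x y. x \<in> S \<Longrightarrow> y \<in> S \<Longrightarrow> x + y \<in> S" and x: "x \<in> S" and k: "k \<ge> 1"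
  shows "k * x \<in> S"
  using k
proof (induction k rule: nat_induct_at_least)
  case base thus ?case using x by simp
next
  case (Suc n) thus ?case using add x by (simp add: add.commute)
qed

text \<open>The least positive difference \<open>m\<close> of two elements of \<open>S\<close> divides every element of \<open>S\<close>,
  hence \<open>m = Gcd S = 1\<close>.\<close>

lemma add_closed_Gcd_eq_1_consecutive:
  fixes S :: "nat set"
  assumes add: "\<And>x y. x \<in> S \<Longrightarrow> y \<in> S \<Longrightarrow> x + y \<in> S" and "0 \<notin> S" and "Gcd S = 1"
  obtains a where "a > 0" "a \<in> S" "a + 1 \<in> S"
proof -
  define D where "D = {d. d > 0 \<and> (\<exists>x\<in>S. x + d \<in> S)}"
  obtain s where s: "s \<in> S" using \<open>Gcd S = 1\<close> by fastforce
  have "s > 0" using s \<open>0 \<notin> S\<close> by (cases s) auto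
  hence "s \<in> D" unfolding D_def using s add[OF s s] by blast
  define m where "m = (LEAST d. d \<in> D)"
  have "m \<in> D" unfolding m_def using \<open>s \<in> D\<close> by (rule LeastI)
  then obtain x where x: "x \<in> S" "x + m \<in> S" and "m > 0" unfolding D_def by auto
  have "m dvd t" if t: "t \<in> S" for t
  proof (rule ccontr)
    assume "\<not> m dvd t"
    define q r where "q = t div m" and "r = t mod m"
    have r: "0 < r" "r < m" using \<open>\<not> m dvd t\<close> \<open>m > 0\<close> unfolding r_def
      by (auto simp: mod_greater_zero_iff_not_dvd)
    have "t = q * m + r" unfolding q_def r_def by simp
    hence "(q + 1) * (x + m) = ((q + 1) * x + t) + (m - r)" using r by (simp add: algebra_simps)
    moreover have "(q + 1) * (x + m) \<in> S" "(q + 1) * x + t \<in> S"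
      using add_closed_mult_mem[OF add, of _ "q + 1"] x add t by auto
    ultimately have "m - r \<in> D" unfolding D_def using r by auto
    hence "m \<le> m - r" unfolding m_def by (rule Least_le)
    thus False using r by simp
  qed
  hence "m dvd Gcd S" by (intro Gcd_greatest) auto
  hence "m = 1" using \<open>Gcd S = 1\<close> by simp
  moreover have "x > 0" using x \<open>0 \<notin> S\<close> by (cases x) auto
  ultimately show thesis using that x by simp
qed

lemma add_closed_consecutive_ge_square:
  fixes S :: "nat set"
  assumes add: "\<And>x y. x \<in> S \<Longrightarrow> y \<in> S \<Longrightarrow> x + y \<in> S"
    and a: "a > 0" "a \<in> S" "a + 1 \<in> S" and n: "n \<ge> a * a"
  shows "n \<in> S"
proof -
  define q r where "q = n div a" and "r = n mod a"
  have r: "r < a" and nq: "n = q * a + r" unfolding q_def r_def using a by simp_all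
  have "a \<le> q"
  proof (rule ccontr)
    assume "\<not> a \<le> q"
    hence "(q + 1) * a \<le> a * a" by (intro mult_right_mono) simp_all
    thus False using n nq r by simp
  qed
  hence qr: "q - r \<ge> 1" using r by simp
  have "n = (q - r) * a + r * (a + 1)" using nq qr r by (simp add: algebra_simps diff_mult_distrib)
  moreover have "(q - r) * a \<in> S" using add_closed_mult_mem[OF add a(2) qr] .
  moreover have "r * (a + 1) \<in> S" if "r \<noteq> 0" using add_closed_mult_mem[OF add a(3)] that by simp
  ultimately show ?thesis using add by (cases "r = 0") auto
qed

lemma add_closed_Gcd_eq_1_cofinite:
  fixes S :: "nat set"
  assumes "\<And>x y. x \<in> S \<Longrightarrow> y \<in> S \<Longrightarrow> x + y \<in> S" and "0 \<notin> S" and "Gcd S = 1"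
  obtains K where "\<And>n. n \<ge> K \<Longrightarrow> n \<in> S"
  using add_closed_Gcd_eq_1_consecutive[OF assms] add_closed_consecutive_ge_square[OF assms(1)]
  by metis

text \<open>From \<open>z\<close> walk to a vertex \<open>v\<close> with the fewest reachable vertices; everything reachable
  from \<open>v\<close> leads back to \<open>v\<close>, so the class of \<open>v\<close> is closed and therefore equal to \<open>C\<close>.\<close>

lemma reaches_unique_irreducible_class:
  fixes A :: "('a::finite \<times> 'a) set"
  assumes uniq: "\<And>C'. irreducible_class A C' \<Longrightarrow> C' = C"
    and C: "irreducible_class A C" and y: "y \<in> C"
  shows "(z, y) \<in> A\<^sup>*"
proof -
  define R where "R v = {u. (v, u) \<in> A\<^sup>*}" for v
  obtain v where zv: "(z, v) \<in> A\<^sup>*" and vmin: "\<And>u. (z, u) \<in> A\<^sup>* \<Longrightarrow> card (R v) \<le> card (R u)"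
    using ex_has_least_nat[of "\<lambda>u. (z, u) \<in> A\<^sup>*" z "\<lambda>u. card (R u)"] by auto
  have returns: "(u, v) \<in> A\<^sup>*" if "u \<in> R v" for u
  proof -
    have sub: "R u \<subseteq> R v" using that unfolding R_def by auto
    moreover have "card (R v) \<le> card (R u)"
      using vmin zv that unfolding R_def by (meson mem_Collect_eq rtrancl_trans)
    moreover have "card (R u) \<le> card (R v)" using sub by (intro card_mono) auto
    ultimately have "R u = R v" by (intro card_subset_eq) auto
    thus ?thesis unfolding R_def by auto
  qed
  define Cv where "Cv = {u. (v, u) \<in> A\<^sup>* \<and> (u, v) \<in> A\<^sup>*}"
  have "comm_class A Cv" unfolding comm_class_def Cv_def by blast
  moreover have "closed_set A Cv" unfolding closed_set_def
  proof (intro ballI allI impI)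
    fix x u assume "x \<in> Cv" "(x, u) \<in> A"
    hence "(v, u) \<in> A\<^sup>*" unfolding Cv_def by auto
    thus "u \<in> Cv" using returns unfolding Cv_def R_def by auto
  qed
  ultimately have "Cv = C" using uniq unfolding irreducible_class_def by blast
  hence "(v, y) \<in> A\<^sup>*" using y unfolding Cv_def by auto
  thus ?thesis using zv by (rule rtrancl_trans[rotated])
qed

text \<open>Aperiodicity makes the return times to \<open>y\<close> cofinite; padding the finitely many
  paths into \<open>y\<close> by loops at \<open>y\<close> gives them all the same length.\<close>

lemma unique_aperiodic_class_common_relpow:
  fixes A :: "('a::finite \<times> 'a) set"
  assumes "\<exists>C. irreducible_class A C \<and> aperiodic_class A C \<and> (\<forall>C'. irreducible_class A C' \<longrightarrow> C' = C)"
  obtains y M where "M \<ge> 1" "\<And>z. (z, y) \<in> A ^^ M"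
proof -
  obtain C where C: "irreducible_class A C" and ap: "aperiodic_class A C"
      and uniq: "\<And>C'. irreducible_class A C' \<Longrightarrow> C' = C"
    using assms by blast
  obtain y where Cy: "C = {u. (y, u) \<in> A\<^sup>* \<and> (u, y) \<in> A\<^sup>*}"
    using C unfolding irreducible_class_def comm_class_def by blast
  hence y: "y \<in> C" by simp
  define S where "S = {n. n > 0 \<and> (y, y) \<in> A ^^ n}"
  have "x1 + x2 \<in> S" if "x1 \<in> S" "x2 \<in> S" for x1 x2
    using that unfolding S_def by (auto simp: relpow_add)
  moreover have "0 \<notin> S" unfolding S_def by simp
  moreover have "Gcd S = 1" using ap y unfolding S_def aperiodic_class_def period_def by blast
  ultimately obtain K where "\<And>n. n \<ge> K \<Longrightarrow> n \<in> S" using add_closed_Gcd_eq_1_cofinite by blast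
  hence K: "\<And>n. n \<ge> K \<Longrightarrow> (y, y) \<in> A ^^ n" unfolding S_def by blast
  have "\<forall>z. \<exists>d. (z, y) \<in> A ^^ d"
    using reaches_unique_irreducible_class[OF uniq C y] by (simp add: rtrancl_power)
  then obtain d where d: "\<And>z. (z, y) \<in> A ^^ d z" by metis
  define M where "M = Max (range d) + K + 1"
  have "(z, y) \<in> A ^^ M" for z
  proof -
    have dz: "d z \<le> Max (range d)" by (rule Max_ge) auto
    hence "M - d z \<ge> K" unfolding M_def by arith
    hence "(y, y) \<in> A ^^ (M - d z)" by (rule K)
    hence "(z, y) \<in> A ^^ (d z + (M - d z))" using d[of z] by (auto simp: relpow_add)
    thus ?thesis using dz unfolding M_def by simp
  qed
  moreover have "M \<ge> 1" unfolding M_def by simp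
  ultimately show thesis using that by blast
qed

section \<open>Windows in i.i.d.\ sequences\<close>

text \<open>\<open>comb_seq b\<close> pushes the product of two copies of \<open>S\<close> forward to \<open>S\<close>, so the first \<open>b\<close>
  coordinates are independent of the sequence shifted by \<open>b\<close>.\<close>

lemma (in sequence_space) measure_prefix_event_Int_shift:
  assumes E: "E \<in> sets S" and N: "N \<in> sets S"
    and prefix: "\<And>\<omega> \<omega>'. \<omega> \<in> space S \<Longrightarrow> \<omega>' \<in> space S \<Longrightarrow> (\<forall>j<b. \<omega> j = \<omega>' j) \<Longrightarrow>
      \<omega> \<in> E \<Longrightarrow> \<omega>' \<in> E"
  shows "measure S {\<omega> \<in> E. (\<lambda>j. \<omega> (j + b)) \<in> N} = measure S E * measure S N"
proof -
  let ?F = "{\<omega> \<in> E. (\<lambda>j. \<omega> (j + b)) \<in> N}"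
  let ?comb = "\<lambda>(\<omega>, \<omega>'). comb_seq b \<omega> \<omega>'"
  have shift: "(\<lambda>\<omega> j. \<omega> (j + b)) \<in> measurable S S"
    by (rule measurable_PiM_single') (auto simp: space_PiM PiE_iff)
  have F: "?F \<in> sets S"
  proof -
    have "?F = E \<inter> ((\<lambda>\<omega> j. \<omega> (j + b)) -` N \<inter> space S)" using sets.sets_into_space[OF E] by auto
    thus ?thesis using E measurable_sets[OF shift N] by auto
  qed
  have comb_space: "comb_seq b \<omega> \<omega>' \<in> space S" if "\<omega> \<in> space S" "\<omega>' \<in> space S" for \<omega> \<omega>'
    using that by (auto simp: space_PiM PiE_iff split: split_comb_seq)
  have comb_shift: "(\<lambda>j. comb_seq b \<omega> \<omega>' (j + b)) = \<omega>'" for \<omega> \<omega>' :: "nat \<Rightarrow> 'a"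
    by (auto simp: comb_seq_add)
  have "?comb -` ?F \<inter> space (S \<Otimes>\<^sub>M S) = E \<times> N"
  proof (intro set_eqI iffI)
    fix x assume x: "x \<in> ?comb -` ?F \<inter> space (S \<Otimes>\<^sub>M S)"
    then obtain \<omega> \<omega>' where x_eq: "x = (\<omega>, \<omega>')" and sp: "\<omega> \<in> space S" "\<omega>' \<in> space S"
      by (auto simp: space_pair_measure)
    have "comb_seq b \<omega> \<omega>' \<in> E" using x x_eq by auto
    hence "\<omega> \<in> E" using prefix[OF comb_space[OF sp] sp(1)] by (simp add: comb_seq_less)
    thus "x \<in> E \<times> N" using x x_eq comb_shift by auto
  next
    fix x assume x: "x \<in> E \<times> N"
    then obtain \<omega> \<omega>' where x_eq: "x = (\<omega>, \<omega>')" and sp: "\<omega> \<in> space S" "\<omega>' \<in> space S"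
      using sets.sets_into_space[OF E] sets.sets_into_space[OF N] by auto
    have "comb_seq b \<omega> \<omega>' \<in> E" using x x_eq prefix[OF sp(1) comb_space[OF sp]] by (simp add: comb_seq_less)
    thus "x \<in> ?comb -` ?F \<inter> space (S \<Otimes>\<^sub>M S)"
      using x x_eq sp comb_shift by (auto simp: space_pair_measure)
  qed
  moreover have "emeasure S ?F = emeasure (distr (S \<Otimes>\<^sub>M S) S ?comb) ?F"
    by (simp only: PiM_comb_seq)
  ultimately have "emeasure S ?F = emeasure (S \<Otimes>\<^sub>M S) (E \<times> N)"
    by (simp add: emeasure_distr[OF measurable_comb_seq F])
  also have "\<dots> = emeasure S E * emeasure S N"
    by (rule P.emeasure_pair_measure_Times) (simp_all add: E N)
  finally show ?thesis unfolding measure_def by (simp only: enn2real_mult)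
qed

lemma (in prob_space) prob_eq_0_if_disjoint_multiples:
  fixes F :: "nat \<Rightarrow> 'a set" and c :: "nat \<Rightarrow> real"
  assumes F: "\<And>k. F k \<in> events" and "disjoint_family F"
    and prob_F: "\<And>k. prob (F k) = c k * prob N"
    and unbounded: "\<And>B. \<exists>K. B < (\<Sum>k<K. c k)"
  shows "prob N = 0"
proof (rule ccontr)
  assume "prob N \<noteq> 0"
  hence pos: "0 < prob N" using measure_nonneg[of M N] by linarith
  obtain K where K: "1 / prob N < (\<Sum>k<K. c k)" using unbounded by blast
  have "prob N * (\<Sum>k<K. c k) = (\<Sum>k<K. prob (F k))"
    by (simp add: prob_F sum_distrib_left mult.commute)
  also have "\<dots> = prob (\<Union>k<K. F k)"
    using disjoint_family_on_mono[OF subset_UNIV \<open>disjoint_family F\<close>] F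
    by (intro measure_finite_Union[symmetric]) auto
  also have "\<dots> \<le> 1" by (rule prob_le_1)
  finally show False using K pos by (simp add: field_simps)
qed

text \<open>Let \<open>N\<close> be the event that no window occurs. The events ``the window at \<open>k L\<close> occurs and
  the sequence shifted past it lies in \<open>N\<close>'' are disjoint, by the shift property of \<open>C\<close>, and have
  probability \<open>P(window at k L) P(N)\<close>.\<close>

lemma (in sequence_space) AE_ex_window:
  fixes C :: "nat \<Rightarrow> nat \<Rightarrow> 'a set" and L :: nat
  assumes C: "\<And>m j. C m j \<in> sets M"
    and shift: "\<And>m b j. b \<le> m \<Longrightarrow> C (m - b) j = C m (j + b)"
    and unbounded: "\<And>B. \<exists>K. B < (\<Sum>k<K. \<Prod>j<k*L+L. measure M (C (k*L) j))"
  shows "AE \<omega> in S. \<exists>m. \<forall>j<m+L. \<omega> j \<in> C m j"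
proof -
  define E where "E m = {\<omega> \<in> space S. \<forall>j<m+L. \<omega> j \<in> C m j}" for m
  have E_emb: "E m = prod_emb UNIV (\<lambda>_. M) {..<m+L} (\<Pi>\<^sub>E j\<in>{..<m+L}. C m j)" for m
    unfolding E_def prod_emb_def by (auto simp: space_PiM Pi_iff)
  have E[measurable]: "E m \<in> sets S" for m
    unfolding E_emb by (rule sets_PiM_I) (auto simp: C)
  have measure_E: "measure S (E m) = (\<Prod>j<m+L. measure M (C m j))" for m
    unfolding E_emb by (rule measure_PiM_emb) (auto simp: C)
  define N where "N = space S - (\<Union>m. E m)"
  have N[measurable]: "N \<in> sets S" unfolding N_def by auto
  define F where "F m = {\<omega> \<in> E m. (\<lambda>j. \<omega> (j + (m + L))) \<in> N}" for m
  have F: "F m \<in> sets S" for m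
  proof -
    have "F m = E m \<inter> ((\<lambda>\<omega> j. \<omega> (j + (m + L))) -` N \<inter> space S)"
      unfolding F_def using sets.sets_into_space[OF E] by auto
    moreover have "(\<lambda>\<omega> j. \<omega> (j + (m + L))) \<in> measurable S S"
      by (rule measurable_PiM_single') (auto simp: space_PiM PiE_iff)
    ultimately show ?thesis using E N by (auto intro: measurable_sets)
  qed
  have measure_F: "measure S (F m) = measure S (E m) * measure S N" for m
    unfolding F_def
  proof (rule measure_prefix_event_Int_shift[OF E N])
    fix \<omega> \<omega>' assume "\<omega>' \<in> space S" "\<forall>j<m+L. \<omega> j = \<omega>' j" "\<omega> \<in> E m"
    thus "\<omega>' \<in> E m" unfolding E_def by simp
  qed
  have disjoint: "F (k1 * L) \<inter> F (k2 * L) = {}" if "k1 < k2" for k1 k2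
  proof (rule ccontr)
    assume "F (k1 * L) \<inter> F (k2 * L) \<noteq> {}"
    then obtain \<omega> where \<omega>1: "\<omega> \<in> F (k1 * L)" and \<omega>2: "\<omega> \<in> E (k2 * L)" unfolding F_def by blast
    let ?b = "k1 * L + L"
    have "Suc k1 * L \<le> k2 * L" using that by (intro mult_le_mono1) simp
    hence b: "?b \<le> k2 * L" by simp
    have "(\<lambda>j. \<omega> (j + ?b)) \<in> E (k2 * L - ?b)"
      using \<omega>2 b shift[OF b] by (auto simp: E_def space_PiM PiE_iff)
    moreover have "(\<lambda>j. \<omega> (j + ?b)) \<in> N" using \<omega>1 unfolding F_def by (simp add: add.commute)
    ultimately show False unfolding N_def by auto
  qed
  have "disjoint_family (\<lambda>k. F (k * L))"
    unfolding disjoint_family_on_def using disjoint by (metis Int_commute linorder_neqE_nat)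
  hence "measure S N = 0"
    using unbounded by (intro P.prob_eq_0_if_disjoint_multiples[OF F]) (auto simp: measure_F measure_E)
  hence "N \<in> null_sets S" using N by (simp add: null_sets_def emeasure_eq_measure)
  thus ?thesis by (rule AE_I') (auto simp: N_def E_def)
qed

lemma sum_lessThan_mult_le_block_sum:
  fixes f :: "nat \<Rightarrow> real"
  assumes antimono: "\<And>n. f (Suc n) \<le> f n"
  shows "(\<Sum>n<K * L. f n) \<le> L * (\<Sum>k<K. f (k * L))"
proof (induction K)
  case (Suc K)
  have split: "(\<Sum>n<a + b. f n) = (\<Sum>n<a. f n) + (\<Sum>t<b. f (a + t))" for a b
    by (induction b) (simp_all add: add.assoc)
  have "(\<Sum>n<Suc K * L. f n) = (\<Sum>n<K * L. f n) + (\<Sum>t<L. f (K * L + t))"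
    using split[of "K * L" L] by (simp add: add.commute)
  also have "(\<Sum>t<L. f (K * L + t)) \<le> (\<Sum>t<L. f (K * L))"
    by (intro sum_mono lift_Suc_antimono_le[of f, OF antimono]) simp
  finally show ?case using Suc.IH by (simp add: algebra_simps)
qed simp

lemma mem_PiE_option_iff:
  "v \<in> PiE UNIV (\<lambda>c. case c of None \<Rightarrow> A | Some z \<Rightarrow> B z) \<longleftrightarrow>
     v None \<in> A \<and> (\<forall>z. v (Some z) \<in> B z)"
  by (auto simp: PiE_iff split: option.splits)

abbreviation uniform01 :: "real measure" where
  "uniform01 \<equiv> uniform_measure lborel {0..<1}"

lemma prob_space_uniform01: "prob_space uniform01"
  by (rule prob_space_uniform_measure) auto

lemma measure_uniform01_atLeastLessThan:
  assumes "0 \<le> x" "x \<le> y" "y \<le> 1"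
  shows "measure uniform01 {x..<y} = y - x"
proof -
  have "{0..<1::real} \<inter> {x..<y} = {x..<y}" using assms by auto
  hence "emeasure uniform01 {x..<y} = ennreal (y - x)" using assms by (simp add: divide_ennreal_def)
  thus ?thesis unfolding measure_def using assms by simp
qed

lemma prob_space_Vmeas: "prob_space Vmeas"
  unfolding Vmeas_def by (rule prob_space_PiM) (rule prob_space_uniform01)

lemma space_Vmeas [simp]: "space Vmeas = UNIV"
  by (auto simp: Vmeas_def space_PiM PiE_def extensional_def)

lemma sequence_space_Vmeas: "sequence_space (Vmeas :: ('g::finite option \<Rightarrow> real) measure)"
proof -
  interpret prob_space "Vmeas :: ('g::finite option \<Rightarrow> real) measure" by (rule prob_space_Vmeas)
  show ?thesis by unfold_locales
qed

lemma PiE_in_sets_Vmeas: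
  assumes "\<And>c. F c \<in> sets borel"
  shows "PiE UNIV F \<in> sets Vmeas"
  unfolding Vmeas_def by (rule sets_PiM_I_finite) (auto simp: assms)

lemma measure_Vmeas_PiE:
  assumes "\<And>c. F c \<in> sets borel"
  shows "measure (Vmeas :: ('g::finite option \<Rightarrow> real) measure) (PiE UNIV F) = (\<Prod>c\<in>UNIV. measure uniform01 (F c))"
proof -
  interpret U: prob_space uniform01 by (rule prob_space_uniform01)
  interpret product_prob_space "\<lambda>_. uniform01" UNIV by unfold_locales
  have "PiE UNIV F = {x \<in> space (Pi\<^sub>M UNIV (\<lambda>_. uniform01)). \<forall>i\<in>UNIV. x i \<in> F i}"
    by (auto simp: space_PiM PiE_def extensional_def Pi_def)
  hence "emeasure (Pi\<^sub>M UNIV (\<lambda>_. uniform01)) (PiE UNIV F) = (\<Prod>c\<in>UNIV. emeasure uniform01 (F c))"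
    using emeasure_PiM_Collect[of UNIV F] assms by simp
  thus ?thesis unfolding Vmeas_def emeasure_eq_measure U.emeasure_eq_measure
    by (simp add: prod_ennreal measure_nonneg prod_nonneg)
qed

section \<open>The kernel and the modified maximal coupling\<close>

lemma acond_cong: "(\<And>i. i < k \<Longrightarrow> w i = w' i) \<Longrightarrow> acond p k g w = acond p k g w'"
proof -
  assume "\<And>i. i < k \<Longrightarrow> w i = w' i"
  hence "{z \<in> admissible p. \<forall>i<k. z i = w i} = {z \<in> admissible p. \<forall>i<k. z i = w' i}" by auto
  thus ?thesis unfolding acond_def Let_def by (simp only:)
qed

lemma push_0 [simp]: "push x w 0 = x"
  and push_Suc [simp]: "push x w (Suc j) = w j"
  by (simp_all add: push_def)

lemma map_push_upt: "map (push g w) [0..<Suc n] = g # map w [0..<n]"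
  by (induction n) auto

lemma push_admissible:
  assumes w: "w \<in> admissible p" and pg: "0 < p g w"
  shows "push g w \<in> admissible p"
  unfolding admissible_def
proof (intro CollectI allI impI)
  fix n :: nat assume "n \<ge> 1"
  then obtain m where n: "n = Suc m" by (cases n) auto
  show "\<not> forbidden p (map (push g w) [0..<n])"
  proof (cases m)
    case 0
    thus ?thesis using n pg by (auto simp: map_push_upt intro!: exI[of _ w])
  next
    case (Suc m')
    obtain s1 ss where xs: "map w [0..<Suc m'] = s1 # ss" by (cases "map w [0..<Suc m']") auto
    have "\<not> forbidden p (map w [0..<Suc m'])" using w unfolding admissible_def by auto
    moreover have "\<forall>i<length (s1 # ss). w i = (s1 # ss) ! i"
      unfolding xs[symmetric] by (simp del: upt_Suc)
    hence "\<not> (\<forall>z. (\<forall>i < length (s1 # ss). z i = (s1 # ss) ! i) \<longrightarrow> p g z = 0)"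
      using pg by auto
    moreover have pushed: "map (push g w) [0..<n] = g # s1 # ss"
      using xs by (simp only: n Suc map_push_upt)
    ultimately show ?thesis unfolding pushed forbidden.simps xs by blast
  qed
qed

definition unit_box :: "('c \<Rightarrow> real) set" where
  "unit_box = {v. \<forall>c. 0 \<le> v c \<and> v c < 1}"

locale history_kernel =
  fixes p :: "'g::finite \<Rightarrow> 'g hist \<Rightarrow> real"
  assumes p_nonneg: "\<And>g w. 0 \<le> p g w"
    and p_sum: "\<And>w. (\<Sum>g\<in>UNIV. p g w) = 1"
    and admissible_nonempty: "admissible p \<noteq> {}"
begin

lemma acond_le:
  assumes "z \<in> admissible p" "\<And>i. i < k \<Longrightarrow> z i = w i"
  shows "acond p k g w \<le> p g z"
proof -
  let ?S = "{z \<in> admissible p. \<forall>i<k. z i = w i}"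
  have "z \<in> ?S" using assms by auto
  hence "?S \<noteq> {}" by auto
  moreover have "(INF z\<in>?S. p g z) \<le> p g z"
    by (rule cINF_lower) (use \<open>z \<in> ?S\<close> in \<open>auto intro!: bdd_belowI[of _ 0] simp: p_nonneg\<close>)
  ultimately show ?thesis unfolding acond_def Let_def by (simp only: if_False)
qed

lemma acond_nonneg: "0 \<le> acond p k g w"
  unfolding acond_def Let_def by (auto intro: cINF_greatest p_nonneg)

lemma atot_nonneg: "0 \<le> atot p k w"
  unfolding atot_def by (simp add: acond_nonneg sum_nonneg)

lemma atot_le_1: "w \<in> admissible p \<Longrightarrow> atot p k w \<le> 1"
  using sum_mono[of UNIV "\<lambda>g. acond p k g w" "\<lambda>g. p g w"] acond_le[of w k w] p_sum
  unfolding atot_def by simp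

lemma amin_le_atot: "w \<in> admissible p \<Longrightarrow> amin p k \<le> atot p k w"
  unfolding amin_def by (rule cINF_lower) (auto intro: bdd_belowI2 atot_nonneg)

lemma amin_nonneg: "0 \<le> amin p k"
  unfolding amin_def using admissible_nonempty by (intro cINF_greatest) (auto simp: atot_nonneg)

lemma amin_le_1: "amin p k \<le> 1"
  using admissible_nonempty amin_le_atot atot_le_1 by (meson equals0I order_trans)

end

locale fbar_coupling = history_kernel p for p :: "'g::finite \<Rightarrow> 'g hist \<Rightarrow> real" +
  fixes fb :: "real \<Rightarrow> 'g hist \<Rightarrow> 'g"
  assumes fbar: "fbar_ok p fb"
    and sum_prod_amin_at_top: "filterlim (\<lambda>N. \<Sum>n\<in>{1..N}. \<Prod>m\<in>{1..n}. amin p m) at_top sequentially"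
begin

lemma sum_prod_amin_unbounded:
  obtains N where "B < (\<Sum>n\<in>{1..N}. \<Prod>m\<in>{1..n}. amin p m)"
proof -
  have "\<forall>\<^sub>F N in sequentially. B + 1 \<le> (\<Sum>n\<in>{1..N}. \<Prod>m\<in>{1..n}. amin p m)"
    using sum_prod_amin_at_top unfolding filterlim_at_top by blast
  then obtain N where "B + 1 \<le> (\<Sum>n\<in>{1..N}. \<Prod>m\<in>{1..n}. amin p m)"
    unfolding eventually_sequentially by blast
  thus thesis by (intro that[of N]) simp
qed

lemma amin_1_pos: "0 < amin p 1"
proof (rule ccontr)
  assume "\<not> 0 < amin p 1"
  hence "amin p 1 = 0" using amin_nonneg[of 1] by simp
  hence "(\<Prod>m\<in>{1..n}. amin p m) = 0" if "n \<ge> 1" for n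
    using that by (intro prod_zero bexI[of _ 1]) auto
  hence "(\<Sum>n\<in>{1..N}. \<Prod>m\<in>{1..n}. amin p m) = 0" for N by (intro sum.neutral) simp
  thus False using sum_prod_amin_unbounded[of 0] by (metis less_irrefl)
qed

text \<open>If all \<open>a\<^sub>k \<le> u < 1\<close>, the series of condition (i) would be dominated by a geometric one.\<close>

lemma ex_amin_gt:
  assumes "u < 1"
  obtains k where "k \<ge> 1" "u < amin p k"
proof -
  have "\<exists>k\<ge>1. u < amin p k"
  proof (rule ccontr)
    assume "\<not> (\<exists>k\<ge>1. u < amin p k)"
    hence le: "\<And>k. k \<ge> 1 \<Longrightarrow> amin p k \<le> u" by auto
    have u: "0 \<le> u" using le[of 1] amin_nonneg[of 1] by simp
    have "(\<Sum>n\<in>{1..N}. \<Prod>m\<in>{1..n}. amin p m) \<le> 1 / (1 - u)" for N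
    proof -
      have "(\<Prod>m\<in>{1..n}. amin p m) \<le> (\<Prod>m\<in>{1..n}. u)" for n
        by (intro prod_mono) (auto simp: amin_nonneg le)
      hence "(\<Sum>n\<in>{1..N}. \<Prod>m\<in>{1..n}. amin p m) \<le> (\<Sum>n\<in>{1..N}. u ^ n)"
        by (intro sum_mono) simp
      also have "\<dots> \<le> (\<Sum>n<Suc N. u ^ n)" by (rule sum_mono2) (auto simp: u)
      also have "\<dots> = (1 - u ^ Suc N) / (1 - u)" by (simp only: sum_gp_strict) (use \<open>u < 1\<close> in simp)
      also have "\<dots> \<le> 1 / (1 - u)" using \<open>u < 1\<close> u by (intro divide_right_mono) auto
      finally show ?thesis .
    qed
    thus False using sum_prod_amin_unbounded[of "1 / (1 - u)"] by (meson not_less)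
  qed
  thus thesis using that by blast
qed

lemma fb_first_block:
  assumes w: "w \<in> admissible p"
  shows fb_first_block_cong: "\<And>w' h. w' \<in> admissible p \<Longrightarrow> w' 0 = w 0 \<Longrightarrow>
      {u\<in>{0..<atot p 1 w'}. fb u w' = h} = {u\<in>{0..<atot p 1 w}. fb u w = h}"
    and acond_fb_first_block_pos: "\<And>u. u \<in> {0..<atot p 1 w} \<Longrightarrow> 0 < acond p 1 (fb u w) w"
    and fb_first_block_interval: "\<And>g. 0 < acond p 1 g w \<Longrightarrow>
      \<exists>lo hi. 0 \<le> lo \<and> lo < hi \<and> hi \<le> amin p 1 \<and> {lo..<hi} \<subseteq> {u\<in>{0..<atot p 1 w}. fb u w = g}"
proof -
  obtain c1 d1 c2 d2 :: "'g \<Rightarrow> 'g \<Rightarrow> real" where H: "\<forall>w\<in>admissible p. \<forall>h.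
          c1 h (w 0) \<le> d1 h (w 0) \<and> c2 h (w 0) \<le> d2 h (w 0)
        \<and> {c1 h (w 0)..<d1 h (w 0)} \<inter> {c2 h (w 0)..<d2 h (w 0)} = {}
        \<and> (d1 h (w 0) - c1 h (w 0)) + (d2 h (w 0) - c2 h (w 0)) = acond p 1 h w
        \<and> {u\<in>{0..<atot p 1 w}. fb u w = h} = {c1 h (w 0)..<d1 h (w 0)} \<union> {c2 h (w 0)..<d2 h (w 0)}
        \<and> (acond p 1 h w > 0 \<longrightarrow> {c1 h (w 0)..<d1 h (w 0)} \<inter> {0..<amin p 1} \<noteq> {})"
    using fbar[unfolded fbar_ok_def, THEN conjunct2, THEN conjunct2, THEN conjunct2, THEN conjunct2]
    by blast
  have split: "{u\<in>{0..<atot p 1 w'}. fb u w' = h} = {c1 h (w' 0)..<d1 h (w' 0)} \<union> {c2 h (w' 0)..<d2 h (w' 0)}"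
    if "w' \<in> admissible p" for w' h
    using H[rule_format, OF that, of h] by (elim conjE)
  show "{u\<in>{0..<atot p 1 w'}. fb u w' = h} = {u\<in>{0..<atot p 1 w}. fb u w = h}"
    if "w' \<in> admissible p" "w' 0 = w 0" for w' h
    unfolding split[OF that(1)] split[OF w] that(2) ..
  show "0 < acond p 1 (fb u w) w" if u: "u \<in> {0..<atot p 1 w}" for u
  proof -
    let ?h = "fb u w"
    have "u \<in> {u\<in>{0..<atot p 1 w}. fb u w = ?h}" using u by simp
    hence "u \<in> {c1 ?h (w 0)..<d1 ?h (w 0)} \<union> {c2 ?h (w 0)..<d2 ?h (w 0)}"
      unfolding split[OF w] .
    moreover have "c1 ?h (w 0) \<le> d1 ?h (w 0)" using H[rule_format, OF w, of ?h] by (elim conjE)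
    moreover have "c2 ?h (w 0) \<le> d2 ?h (w 0)" using H[rule_format, OF w, of ?h] by (elim conjE)
    moreover have "(d1 ?h (w 0) - c1 ?h (w 0)) + (d2 ?h (w 0) - c2 ?h (w 0)) = acond p 1 ?h w"
      using H[rule_format, OF w, of ?h] by (elim conjE)
    ultimately show ?thesis by auto
  qed
  show "\<exists>lo hi. 0 \<le> lo \<and> lo < hi \<and> hi \<le> amin p 1 \<and> {lo..<hi} \<subseteq> {u\<in>{0..<atot p 1 w}. fb u w = g}"
    if "0 < acond p 1 g w" for g
  proof -
    have "{c1 g (w 0)..<d1 g (w 0)} \<inter> {0..<amin p 1} \<noteq> {}"
      using H[rule_format, OF w, of g] that by (elim conjE) (rule mp)
    let ?lo = "max (c1 g (w 0)) 0" and ?hi = "min (d1 g (w 0)) (amin p 1)"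
    have "?lo < ?hi" using \<open>_ \<noteq> {}\<close> by auto
    have "{?lo..<?hi} \<subseteq> {c1 g (w 0)..<d1 g (w 0)} \<inter> {0..<atot p 1 w}"
      using amin_le_atot[OF w, of 1] by auto
    also have "\<dots> \<subseteq> {u\<in>{0..<atot p 1 w}. fb u w = g}" unfolding split[OF w] by blast
    finally show ?thesis using \<open>?lo < ?hi\<close> by (intro exI[of _ ?lo] exI[of _ ?hi]) auto
  qed
qed

lemma fb_block_interval:
  "2 \<le> k \<Longrightarrow> w \<in> admissible p \<Longrightarrow> \<exists>c d. c \<le> d \<and> d - c = bcond p k g w \<and>
     {u\<in>{alow p k w..<atot p k w}. fb u w = g} = {c..<d}"
  by (fact fbar[unfolded fbar_ok_def, THEN conjunct2, THEN conjunct2, THEN conjunct1, rule_format])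

lemma fb_block_cong:
  "2 \<le> k \<Longrightarrow> w \<in> admissible p \<Longrightarrow> w' \<in> admissible p \<Longrightarrow> (\<And>i. i < k \<Longrightarrow> w i = w' i) \<Longrightarrow>
     u \<in> {alow p k w..<atot p k w} \<Longrightarrow> fb u w = fb u w'"
  by (fact fbar[unfolded fbar_ok_def, THEN conjunct2, THEN conjunct2, THEN conjunct2, THEN conjunct1, rule_format])

lemma fb_cong:
  assumes "1 \<le> k" and w: "w \<in> admissible p" and w': "w' \<in> admissible p"
    and agree: "\<And>i. i < k \<Longrightarrow> w' i = w i" and u: "0 \<le> u" "u < atot p k w"
  shows "fb u w' = fb u w"
  using assms(1) agree u(2)
proof (induction k rule: nat_induct_at_least)
  case base
  have "w' 0 = w 0" using base.prems(1) by simp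
  hence "{v\<in>{0..<atot p 1 w'}. fb v w' = fb u w} = {v\<in>{0..<atot p 1 w}. fb v w = fb u w}"
    by (rule fb_first_block_cong[OF w w'])
  moreover have "u \<in> {v\<in>{0..<atot p 1 w}. fb v w = fb u w}" using base.prems(2) u(1) by simp
  ultimately show ?case by blast
next
  case (Suc k)
  show ?case
  proof (cases "u < atot p k w")
    case True thus ?thesis using Suc by simp
  next
    case False
    hence "u \<in> {alow p (Suc k) w..<atot p (Suc k) w}" using Suc.prems unfolding alow_def by simp
    moreover have "2 \<le> Suc k" using Suc.hyps by simp
    ultimately show ?thesis using fb_block_cong[OF _ w w'] Suc.prems(1) by (metis less_Suc_eq)
  qed
qed

lemma p_fb_pos:
  assumes "1 \<le> k" and w: "w \<in> admissible p" and u: "0 \<le> u" "u < atot p k w"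
  shows "0 < p (fb u w) w"
  using assms(1) u(2)
proof (induction k rule: nat_induct_at_least)
  case base
  hence "0 < acond p 1 (fb u w) w" using acond_fb_first_block_pos[OF w] u by simp
  also have "\<dots> \<le> p (fb u w) w" using w by (rule acond_le) simp
  finally show ?case .
next
  case (Suc k)
  show ?case
  proof (cases "u < atot p k w")
    case True thus ?thesis using Suc.IH by simp
  next
    case False
    let ?g = "fb u w"
    have u': "u \<in> {alow p (Suc k) w..<atot p (Suc k) w}" using False Suc.prems unfolding alow_def by simp
    obtain c d where "d - c = bcond p (Suc k) ?g w" and
      block: "{u\<in>{alow p (Suc k) w..<atot p (Suc k) w}. fb u w = ?g} = {c..<d}"
      using fb_block_interval[OF _ w, of "Suc k" ?g] Suc.hyps by auto
    moreover have "u \<in> {c..<d}" using u' block by blast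
    ultimately have "0 < bcond p (Suc k) ?g w" by simp
    hence "0 < acond p (Suc k) ?g w" unfolding bcond_def using acond_nonneg[of k ?g w] by simp
    also have "\<dots> \<le> p ?g w" using w by (rule acond_le) simp
    finally show ?thesis .
  qed
qed

lemma fhat_pos:
  assumes w: "w \<in> admissible p" and v: "v \<in> unit_box"
  shows "0 < p (fhat p fb v w) w"
proof (cases "amin p 1 \<le> v None")
  case True
  have v0: "0 \<le> v None" "v None < 1" using v unfolding unit_box_def by auto
  obtain k where k: "k \<ge> 1" "v None < amin p k" using ex_amin_gt[OF v0(2)] by blast
  hence "v None < atot p k w" using amin_le_atot[OF w, of k] by simp
  thus ?thesis using True p_fb_pos[OF k(1) w v0(1)] unfolding fhat_def by simp
next
  case False
  let ?s = "amin p 1 * v (Some (w 0))"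
  have v1: "0 \<le> v (Some (w 0))" "v (Some (w 0)) < 1" using v unfolding unit_box_def by auto
  have "?s < amin p 1" using v1 amin_1_pos by simp
  also have "\<dots> \<le> atot p 1 w" using amin_le_atot[OF w] .
  finally have "0 < p (fb ?s w) w" using v1 amin_1_pos by (intro p_fb_pos[of 1]) (auto simp: w)
  thus ?thesis using False unfolding fhat_def by simp
qed

lemma traj_admissible:
  "w \<in> admissible p \<Longrightarrow> (\<And>i. i < n \<Longrightarrow> vs i \<in> unit_box) \<Longrightarrow> traj p fb vs w n \<in> admissible p"
  by (induction n) (auto intro!: push_admissible fhat_pos)

lemma fhat_cong:
  assumes w: "w \<in> admissible p" and w': "w' \<in> admissible p" and v: "v \<in> unit_box"
    and "1 \<le> k" "v None < amin p k" and agree: "\<And>i. i < k \<Longrightarrow> w' i = w i"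
  shows "fhat p fb v w' = fhat p fb v w"
proof (cases "amin p 1 \<le> v None")
  case True
  have "0 \<le> v None" using v unfolding unit_box_def by auto
  moreover have "v None < atot p k w" using assms(5) amin_le_atot[OF w, of k] by simp
  ultimately show ?thesis using True fb_cong[OF \<open>1 \<le> k\<close> w w' agree] unfolding fhat_def by simp
next
  case False
  let ?s = "amin p 1 * v (Some (w 0))"
  have w0: "w' 0 = w 0" using agree \<open>1 \<le> k\<close> by simp
  have v1: "0 \<le> v (Some (w 0))" "v (Some (w 0)) < 1" using v unfolding unit_box_def by auto
  have "?s < amin p 1" using v1 amin_1_pos by simp
  also have "\<dots> \<le> atot p 1 w" using amin_le_atot[OF w] .
  finally have "fb ?s w' = fb ?s w" using v1 amin_1_pos w0 by (intro fb_cong[of 1 w w']) (auto simp: w w')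
  thus ?thesis using False w0 unfolding fhat_def by simp
qed

end

section \<open>Steering to a common letter and coalescence\<close>

locale fbar_coupling_target = fbar_coupling p fb for p :: "'g::finite \<Rightarrow> 'g hist \<Rightarrow> real" and fb +
  fixes y :: 'g and M :: nat
  assumes M_pos: "1 \<le> M" and relpow_target: "\<And>z. (z, y) \<in> arcs p ^^ M"
begin

definition next_letter :: "nat \<Rightarrow> 'g \<Rightarrow> 'g" where
  "next_letter t z = (SOME g. (z, g) \<in> arcs p \<and> (g, y) \<in> arcs p ^^ (M - Suc t))"

lemma next_letter:
  assumes "t < M" "(z, y) \<in> arcs p ^^ (M - t)"
  shows "(z, next_letter t z) \<in> arcs p \<and> (next_letter t z, y) \<in> arcs p ^^ (M - Suc t)"
proof -
  have "(z, y) \<in> arcs p ^^ Suc (M - Suc t)" using assms by (simp add: Suc_diff_Suc)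
  hence "\<exists>g. (z, g) \<in> arcs p \<and> (g, y) \<in> arcs p ^^ (M - Suc t)" by (rule relpow_Suc_D2)
  thus ?thesis unfolding next_letter_def by (rule someI_ex)
qed

text \<open>The arc condition is only an implication, so that a steering interval exists for every
  pair of letters.\<close>

definition steers :: "'g \<Rightarrow> 'g \<Rightarrow> real \<times> real \<Rightarrow> bool" where
  "steers z g I \<longleftrightarrow> 0 \<le> fst I \<and> fst I < snd I \<and> snd I \<le> amin p 1 \<and>
     ((z, g) \<in> arcs p \<longrightarrow> (\<forall>w\<in>admissible p. w 0 = z \<longrightarrow> (\<forall>u\<in>{fst I..<snd I}. fb u w = g)))"

lemma ex_steers: "\<exists>I. steers z g I"
proof (cases "(z, g) \<in> arcs p \<and> (\<exists>w0\<in>admissible p. w0 0 = z)")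
  case False
  thus ?thesis using amin_1_pos unfolding steers_def by (intro exI[of _ "(0, amin p 1)"]) auto
next
  case True
  then obtain w0 where w0: "w0 \<in> admissible p" "w0 0 = z" and arc: "(z, g) \<in> arcs p" by blast
  have "acond p 1 g w0 = acond p 1 g (\<lambda>_. z)" using w0 by (intro acond_cong) auto
  hence "0 < acond p 1 g w0" using arc unfolding arcs_def by simp
  then obtain lo hi where lohi: "0 \<le> lo" "lo < hi" "hi \<le> amin p 1"
    and block: "{lo..<hi} \<subseteq> {u\<in>{0..<atot p 1 w0}. fb u w0 = g}"
    using fb_first_block_interval[OF w0(1)] by blast
  have "fb u w = g" if "w \<in> admissible p" "w 0 = z" "u \<in> {lo..<hi}" for w u
  proof -
    have "u \<in> {0..<atot p 1 w0}" "fb u w0 = g" using block that(3) by auto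
    moreover have "fb u w = fb u w0" using that w0 \<open>u \<in> {0..<atot p 1 w0}\<close>
      by (intro fb_cong[of 1]) auto
    ultimately show ?thesis by simp
  qed
  thus ?thesis using lohi unfolding steers_def by (intro exI[of _ "(lo, hi)"]) simp
qed

definition steer :: "'g \<Rightarrow> 'g \<Rightarrow> real \<times> real" where
  "steer z g = (SOME I. steers z g I)"

lemma steers_steer: "steers z g (steer z g)"
  unfolding steer_def using ex_steers by (rule someI_ex)

text \<open>On \<open>u\<^sup>0 < a\<^sub>1\<close> the coupling evaluates \<open>fb\<close> at \<open>a\<^sub>1 u\<^sup>z\<close> with \<open>z\<close> the last letter,
  hence the rescaled steering intervals.\<close>

definition steer_box :: "nat \<Rightarrow> ('g option \<Rightarrow> real) set" where
  "steer_box t = PiE UNIV (\<lambda>c. case c of None \<Rightarrow> {0..<amin p 1}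
     | Some z \<Rightarrow> {fst (steer z (next_letter t z)) / amin p 1..<snd (steer z (next_letter t z)) / amin p 1})"

definition memory_box :: "nat \<Rightarrow> ('g option \<Rightarrow> real) set" where
  "memory_box k = PiE UNIV (\<lambda>c. case c of None \<Rightarrow> {0..<amin p k} | Some z \<Rightarrow> {0..<1})"

lemma steer_box_subset_unit_box: "steer_box t \<subseteq> unit_box"
proof
  fix v assume v: "v \<in> steer_box t"
  show "v \<in> unit_box" unfolding unit_box_def
  proof (intro CollectI allI)
    fix c show "0 \<le> v c \<and> v c < 1"
    proof (cases c)
      case None thus ?thesis using v amin_le_1[of 1] unfolding steer_box_def mem_PiE_option_iff by auto
    next
      case (Some z)
      let ?I = "steer z (next_letter t z)"
      have "v c \<in> {fst ?I / amin p 1..<snd ?I / amin p 1}"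
        using v Some unfolding steer_box_def mem_PiE_option_iff by auto
      moreover have "0 \<le> fst ?I / amin p 1" "snd ?I / amin p 1 \<le> 1"
        using steers_steer[of z "next_letter t z"] amin_1_pos unfolding steers_def by auto
      ultimately show ?thesis by auto
    qed
  qed
qed

lemma memory_box_subset_unit_box: "memory_box k \<subseteq> unit_box"
proof
  fix v assume v: "v \<in> memory_box k"
  show "v \<in> unit_box" unfolding unit_box_def
  proof (intro CollectI allI)
    fix c show "0 \<le> v c \<and> v c < 1"
      using v amin_le_1[of k] unfolding memory_box_def mem_PiE_option_iff by (cases c) auto
  qed
qed

lemma fhat_steer_box:
  assumes w: "w \<in> admissible p" and "t < M" and reach: "(w 0, y) \<in> arcs p ^^ (M - t)"
    and v: "v \<in> steer_box t"
  shows "fhat p fb v w = next_letter t (w 0)"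
proof -
  let ?g = "next_letter t (w 0)"
  have arc: "(w 0, ?g) \<in> arcs p" using next_letter[OF \<open>t < M\<close> reach] by blast
  have v: "v None < amin p 1"
    "v (Some (w 0)) \<in> {fst (steer (w 0) ?g) / amin p 1..<snd (steer (w 0) ?g) / amin p 1}"
    using v unfolding steer_box_def mem_PiE_option_iff by auto
  hence "amin p 1 * v (Some (w 0)) \<in> {fst (steer (w 0) ?g)..<snd (steer (w 0) ?g)}"
    using amin_1_pos by (auto simp: pos_divide_le_eq pos_less_divide_eq mult.commute)
  hence "fb (amin p 1 * v (Some (w 0))) w = ?g"
    using steers_steer[of "w 0" ?g] arc w unfolding steers_def by blast
  thus ?thesis using v(1) unfolding fhat_def by simp
qed

lemma traj_steer_boxes:
  assumes w: "w \<in> admissible p" and steer: "\<And>i. i < M \<Longrightarrow> vs i \<in> steer_box i"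
  shows "n \<le> M \<Longrightarrow> (traj p fb vs w n 0, y) \<in> arcs p ^^ (M - n)"
proof (induction n)
  case 0 thus ?case using relpow_target by simp
next
  case (Suc n)
  have "vs i \<in> unit_box" if "i < n" for i
    using that Suc.prems steer[of i] steer_box_subset_unit_box by auto
  hence "traj p fb vs w n \<in> admissible p" by (rule traj_admissible[OF w])
  hence "fhat p fb (vs n) (traj p fb vs w n) = next_letter n (traj p fb vs w n 0)"
    using Suc steer by (intro fhat_steer_box) auto
  thus ?case using next_letter[of n "traj p fb vs w n 0"] Suc by simp
qed

text \<open>After the steering steps every history has last letter \<open>y\<close>; from then on each step
  reads one letter fewer than the number of letters on which the histories already agree.\<close>

lemma traj_agree_after_steering:
  assumes w: "w \<in> admissible p" and w': "w' \<in> admissible p"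
    and steer: "\<And>i. i < M \<Longrightarrow> vs i \<in> steer_box i"
    and memory: "\<And>i. M \<le> i \<Longrightarrow> i < n \<Longrightarrow> vs i \<in> memory_box (Suc i - M)"
    and "M \<le> n"
  shows "i \<le> n - M \<Longrightarrow> traj p fb vs w' n i = traj p fb vs w n i"
  using \<open>M \<le> n\<close> memory
proof (induction n arbitrary: i rule: nat_induct_at_least)
  case base
  thus ?case using traj_steer_boxes[OF w steer order.refl] traj_steer_boxes[OF w' steer order.refl]
    by simp
next
  case (Suc n)
  have box: "vs j \<in> unit_box" if "j < Suc n" for j
  proof (cases "j < M")
    case True thus ?thesis using steer steer_box_subset_unit_box by blast
  next
    case False
    hence "vs j \<in> memory_box (Suc j - M)" using Suc.prems(2) that by simp
    thus ?thesis using memory_box_subset_unit_box by blast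
  qed
  have adm: "traj p fb vs w n \<in> admissible p" "traj p fb vs w' n \<in> admissible p"
    by (rule traj_admissible[OF w], simp add: box) (rule traj_admissible[OF w'], simp add: box)
  have memory_n: "vs n \<in> memory_box (Suc n - M)" using Suc.prems(2) Suc.hyps by simp
  hence "vs n None < amin p (Suc n - M)" unfolding memory_box_def mem_PiE_option_iff by simp
  moreover have agree: "traj p fb vs w' n j = traj p fb vs w n j" if "j < Suc n - M" for j
    using Suc.IH[of j] Suc.prems(2) that by simp
  moreover have "1 \<le> Suc n - M" using Suc.hyps by simp
  ultimately have "fhat p fb (vs n) (traj p fb vs w' n) = fhat p fb (vs n) (traj p fb vs w n)"
    using box[of n] by (intro fhat_cong[OF adm]) simp_all
  show ?case
  proof (cases "i = 0")
    case True thus ?thesis using \<open>fhat p fb (vs n) _ = _\<close> by simp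
  next
    case False
    then obtain j where "i = Suc j" by (cases i) auto
    thus ?thesis using agree[of j] Suc.prems(1) by simp
  qed
qed

lemma fhat_iter_coalesce:
  assumes "w \<in> admissible p" "w' \<in> admissible p" and "M \<le> Suc l"
    and "\<And>i. i < M \<Longrightarrow> vs i \<in> steer_box i"
    and "\<And>i. M \<le> i \<Longrightarrow> i \<le> l \<Longrightarrow> vs i \<in> memory_box (Suc i - M)"
  shows "fhat_iter p fb (Suc l) vs w' = fhat_iter p fb (Suc l) vs w"
  using traj_agree_after_steering[OF assms(1,2,4) _ assms(3), of 0] assms(5)
  unfolding fhat_iter_def by simp

text \<open>\<open>\<omega> j\<close> stands for \<open>V\<^sub>-\<^sub>j\<close>. The window with \<open>m\<close> memory steps occupies positions \<open>j < m + M\<close>;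
  read forward in time, its oldest \<open>M\<close> positions are steering steps \<open>0, \<dots>, M - 1\<close>, and the
  position \<open>j < m\<close> is a memory step that may look at \<open>m - j\<close> letters.\<close>

definition window :: "nat \<Rightarrow> nat \<Rightarrow> ('g option \<Rightarrow> real) set" where
  "window m j = (if j < m then memory_box (m - j) else steer_box (m + M - 1 - j))"

lemma window_in_sets: "window m j \<in> sets Vmeas"
  unfolding window_def steer_box_def memory_box_def
  by (auto intro!: PiE_in_sets_Vmeas split: option.split)

lemma window_shift: "b \<le> m \<Longrightarrow> window (m - b) j = window m (j + b)"
  unfolding window_def using M_pos by (auto simp: algebra_simps)

lemma measure_memory_box: "measure Vmeas (memory_box k) = amin p k"
proof -
  have "measure Vmeas (memory_box k) =
      (\<Prod>c\<in>UNIV. measure uniform01 (case c of None \<Rightarrow> {0..<amin p k} | Some (z :: 'g) \<Rightarrow> {0..<1}))"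
    unfolding memory_box_def by (rule measure_Vmeas_PiE) (simp split: option.split)
  also have "\<dots> = (\<Prod>c\<in>{None}. measure uniform01 (case c of None \<Rightarrow> {0..<amin p k} | Some (z :: 'g) \<Rightarrow> {0..<1}))"
    by (rule prod.mono_neutral_right) (auto simp: measure_uniform01_atLeastLessThan split: option.split)
  also have "\<dots> = amin p k" using amin_nonneg[of k] amin_le_1[of k] by (simp add: measure_uniform01_atLeastLessThan)
  finally show ?thesis .
qed

lemma measure_steer_box_pos: "0 < measure Vmeas (steer_box t)"
proof -
  have "measure Vmeas (steer_box t) = (\<Prod>c\<in>UNIV. measure uniform01 (case c of None \<Rightarrow> {0..<amin p 1}
     | Some z \<Rightarrow> {fst (steer z (next_letter t z)) / amin p 1..<snd (steer z (next_letter t z)) / amin p 1}))"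
    unfolding steer_box_def by (rule measure_Vmeas_PiE) (simp split: option.split)
  also have "\<dots> > 0"
  proof (rule prod_pos)
    fix c :: "'g option"
    show "0 < measure uniform01 (case c of None \<Rightarrow> {0..<amin p 1}
     | Some z \<Rightarrow> {fst (steer z (next_letter t z)) / amin p 1..<snd (steer z (next_letter t z)) / amin p 1})"
    proof (cases c)
      case None thus ?thesis using amin_1_pos amin_le_1[of 1] by (simp add: measure_uniform01_atLeastLessThan)
    next
      case (Some z)
      let ?I = "steer z (next_letter t z)"
      have "0 \<le> fst ?I / amin p 1" "fst ?I / amin p 1 < snd ?I / amin p 1" "snd ?I / amin p 1 \<le> 1"
        using steers_steer[of z "next_letter t z"] amin_1_pos unfolding steers_def
        by (auto simp: divide_strict_right_mono)
      thus ?thesis using Some by (simp add: measure_uniform01_atLeastLessThan)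
    qed
  qed
  finally show ?thesis .
qed

lemma prod_measure_window:
  "(\<Prod>j<m+M. measure Vmeas (window m j)) =
     (\<Prod>i\<in>{1..m}. amin p i) * (\<Prod>t<M. measure Vmeas (steer_box t))"
proof -
  have split: "(\<Prod>j<m+n. f j) = (\<Prod>j<m. f j) * (\<Prod>t<n. f (m + t))" for f :: "nat \<Rightarrow> real" and n
    by (induction n) (simp_all add: mult.assoc)
  have "(\<Prod>j<m. measure Vmeas (window m j)) = (\<Prod>j<m. amin p (m - j))"
    by (rule prod.cong) (simp_all add: window_def measure_memory_box)
  also have "\<dots> = (\<Prod>i\<in>{1..m}. amin p i)"
    by (rule prod.reindex_bij_witness[of _ "\<lambda>i. m - i" "\<lambda>j. m - j"]) auto
  finally have memory: "(\<Prod>j<m. measure Vmeas (window m j)) = (\<Prod>i\<in>{1..m}. amin p i)" .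
  have "(\<Prod>t<M. measure Vmeas (window m (m + t))) = (\<Prod>t<M. measure Vmeas (steer_box (M - Suc t)))"
    by (rule prod.cong) (simp_all add: window_def)
  also have "\<dots> = (\<Prod>t<M. measure Vmeas (steer_box t))" by (rule prod.nat_diff_reindex)
  finally show ?thesis using memory split by simp
qed

lemma window_prob_unbounded: "\<exists>K. B < (\<Sum>k<K. \<Prod>j<k*M+M. measure Vmeas (window (k*M) j))"
proof -
  define g where "g n = (\<Prod>i\<in>{1..n}. amin p i)" for n
  define \<delta> where "\<delta> = (\<Prod>t<M. measure Vmeas (steer_box t))"
  have \<delta>: "0 < \<delta>" unfolding \<delta>_def by (rule prod_pos) (use measure_steer_box_pos in auto)
  have g_nonneg: "0 \<le> g n" for n unfolding g_def by (rule prod_nonneg) (auto simp: amin_nonneg)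
  have g_Suc: "g (Suc n) \<le> g n" for n
  proof -
    have "g (Suc n) = g n * amin p (Suc n)" unfolding g_def by (simp add: prod.nat_ivl_Suc')
    also have "\<dots> \<le> g n" using g_nonneg amin_le_1 by (intro mult_left_le) auto
    finally show ?thesis .
  qed
  obtain N where N: "M * B / \<delta> < (\<Sum>n\<in>{1..N}. g n)"
    using sum_prod_amin_unbounded unfolding g_def by blast
  have "(\<Sum>n\<in>{1..N}. g n) \<le> (\<Sum>n<Suc N * M. g n)"
  proof (rule sum_mono2)
    have "Suc N * 1 \<le> Suc N * M" using M_pos by (rule mult_le_mono2)
    thus "{1..N} \<subseteq> {..<Suc N * M}" by auto
  qed (auto simp: g_nonneg)
  also have "\<dots> \<le> M * (\<Sum>k<Suc N. g (k * M))" by (rule sum_lessThan_mult_le_block_sum[of g, OF g_Suc])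
  finally have "M * (B / \<delta>) < M * (\<Sum>k<Suc N. g (k * M))" using N by simp
  hence "B < (\<Sum>k<Suc N. g (k * M)) * \<delta>" using M_pos \<delta> by (simp add: pos_divide_less_eq)
  also have "\<dots> = (\<Sum>k<Suc N. \<Prod>j<k*M+M. measure Vmeas (window (k*M) j))"
    unfolding sum_distrib_right prod_measure_window g_def \<delta>_def ..
  finally show ?thesis by blast
qed

definition coalesced :: "nat \<Rightarrow> (nat \<Rightarrow> 'g option \<Rightarrow> real) \<Rightarrow> bool" where
  "coalesced l \<omega> \<longleftrightarrow> M \<le> Suc l \<and> (\<forall>j<Suc l. \<omega> j \<in> window (Suc l - M) j)"

definition coalescence_time :: "(nat \<Rightarrow> 'g option \<Rightarrow> real) \<Rightarrow> enat" where
  "coalescence_time \<omega> = (if \<exists>l. coalesced l \<omega> then enat (LEAST l. coalesced l \<omega>) else \<infinity>)"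

lemma coalescence_time_le_enat_iff: "coalescence_time \<omega> \<le> enat n \<longleftrightarrow> (\<exists>l\<le>n. coalesced l \<omega>)"
proof
  assume le: "coalescence_time \<omega> \<le> enat n"
  hence ex: "\<exists>l. coalesced l \<omega>" unfolding coalescence_time_def by (auto split: if_splits)
  hence "(LEAST l. coalesced l \<omega>) \<le> n" using le unfolding coalescence_time_def by simp
  thus "\<exists>l\<le>n. coalesced l \<omega>" using LeastI_ex[OF ex] by blast
next
  assume "\<exists>l\<le>n. coalesced l \<omega>"
  then obtain l where "l \<le> n" "coalesced l \<omega>" by blast
  moreover have "(LEAST l. coalesced l \<omega>) \<le> l" using \<open>coalesced l \<omega>\<close> by (rule Least_le)
  ultimately show "coalescence_time \<omega> \<le> enat n" unfolding coalescence_time_def by auto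
qed

lemma coalesced_coalescence_time: "coalescence_time \<omega> = enat l \<Longrightarrow> coalesced l \<omega>"
  unfolding coalescence_time_def by (metis LeastI_ex enat.inject infinity_ne_i0 enat_0 not_infinity_eq)

lemma coalescence_time_stopping_time:
  "{\<omega> \<in> space Omega. coalescence_time \<omega> \<le> enat n} \<in> sets (past_filt n)"
proof -
  let ?P = "PiM {..n} (\<lambda>_. Vmeas) :: (nat \<Rightarrow> 'g option \<Rightarrow> real) measure"
  have coalesced_sets: "{x \<in> space ?P. coalesced l x} \<in> sets ?P" if "l \<le> n" for l
  proof (cases "M \<le> Suc l")
    case True
    have "{x \<in> space ?P. coalesced l x} =
        prod_emb {..n} (\<lambda>_. Vmeas) {..<Suc l} (PiE {..<Suc l} (window (Suc l - M)))"
      unfolding coalesced_def prod_emb_def using True by (auto simp: space_PiM PiE_iff extensional_def)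
    also have "\<dots> \<in> sets ?P" using that by (intro sets_PiM_I) (auto simp: window_in_sets)
    finally show ?thesis .
  qed (simp add: coalesced_def)
  define X where "X = (\<Union>l\<in>{..n}. {x \<in> space ?P. coalesced l x})"
  have "X \<in> sets ?P" unfolding X_def using coalesced_sets by (intro sets.finite_UN) auto
  moreover have "{\<omega> \<in> space Omega. coalescence_time \<omega> \<le> enat n} = (\<lambda>\<omega>. restrict \<omega> {..n}) -` X \<inter> space Omega"
  proof -
    have "coalesced l (restrict \<omega> {..n}) = coalesced l \<omega>" if "l \<le> n" for l \<omega>
      unfolding coalesced_def using that by auto
    thus ?thesis unfolding X_def coalescence_time_le_enat_iff by (auto simp: space_PiM)
  qed
  ultimately show ?thesis unfolding past_filt_def by (simp add: in_vimage_algebra)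
qed

lemma AE_coalescence_time_finite: "AE \<omega> in Omega. coalescence_time \<omega> \<noteq> \<infinity>"
proof -
  interpret sequence_space "Vmeas :: ('g option \<Rightarrow> real) measure" by (rule sequence_space_Vmeas)
  have "AE \<omega> in Omega. \<exists>m. \<forall>j<m+M. \<omega> j \<in> window m j"
    unfolding Omega_def by (rule AE_ex_window[OF window_in_sets window_shift window_prob_unbounded])
  moreover have "coalescence_time \<omega> \<noteq> \<infinity>" if "\<forall>j<m+M. \<omega> j \<in> window m j" for \<omega> m
  proof -
    have "coalesced (m + M - 1) \<omega>" using that M_pos unfolding coalesced_def by simp
    thus ?thesis unfolding coalescence_time_def by auto
  qed
  ultimately show ?thesis by auto
qed

lemma coalesced_fhat_iter:
  assumes "coalesced l \<omega>" and w: "w \<in> admissible p" and w': "w' \<in> admissible p"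
  shows "fhat_iter p fb (Suc l) (\<lambda>i. \<omega> (l - i)) w' = fhat_iter p fb (Suc l) (\<lambda>i. \<omega> (l - i)) w"
proof (rule fhat_iter_coalesce[OF w w'])
  have M: "M \<le> Suc l" and window: "\<And>j. j < Suc l \<Longrightarrow> \<omega> j \<in> window (Suc l - M) j"
    using assms(1) unfolding coalesced_def by simp_all
  show "M \<le> Suc l" by (fact M)
  show "\<omega> (l - i) \<in> steer_box i" if "i < M" for i
  proof -
    have "\<not> l - i < Suc l - M" "Suc l - M + M - 1 - (l - i) = i" using that M by arith+
    thus ?thesis using window[of "l - i"] unfolding window_def by simp
  qed
  show "\<omega> (l - i) \<in> memory_box (Suc i - M)" if "M \<le> i" "i \<le> l" for i
  proof -
    have "l - i < Suc l - M" "Suc l - M - (l - i) = Suc i - M" using that M by arith+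
    thus ?thesis using window[of "l - i"] unfolding window_def by simp
  qed
qed

lemma backward_coalescence_time:
  assumes "gg \<in> admissible p"
  shows "backward_coalescence_time p fb gg coalescence_time"
  unfolding backward_coalescence_time_def
  using coalescence_time_stopping_time AE_coalescence_time_finite
    coalesced_fhat_iter[OF coalesced_coalescence_time assms] by blast

end

theorem corollary2:
  fixes p :: "'g::finite \<Rightarrow> (nat \<Rightarrow> 'g) \<Rightarrow> real"
    and fb :: "real \<Rightarrow> (nat \<Rightarrow> 'g) \<Rightarrow> 'g"
    and gg :: "nat \<Rightarrow> 'g"
  assumes p_nonneg: "\<And>g w. 0 \<le> p g w"
    and p_le1: "\<And>g w. p g w \<le> 1"
    and p_sum: "\<And>w. (\<Sum>g\<in>UNIV. p g w) = 1"
    and p_meas: "\<And>g. (\<lambda>w. p g w) \<in> borel_measurable (PiM UNIV (\<lambda>_::nat. count_space (UNIV :: 'g set)))"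
    and gg_adm: "gg \<in> admissible p"
    and fb: "fbar_ok p fb"
    and cond_i: "filterlim (\<lambda>N. \<Sum>n\<in>{1..N}. \<Prod>m\<in>{1..n}. amin p m) at_top sequentially"
    and cond_ii: "\<exists>C. irreducible_class (arcs p) C \<and> aperiodic_class (arcs p) C
                     \<and> (\<forall>C'. irreducible_class (arcs p) C' \<longrightarrow> C' = C)"
    and cond_iii: "\<forall>g. \<exists>w. (w, g) \<notin> arcs p"
  shows "\<exists>T. backward_coalescence_time p fb gg T"
proof -
  obtain y M where "1 \<le> M" "\<And>z. (z, y) \<in> arcs p ^^ M"
    using unique_aperiodic_class_common_relpow[OF cond_ii] by blast
  moreover have "admissible p \<noteq> {}" using gg_adm by blast
  ultimately interpret fbar_coupling_target p fb y M
    using p_nonneg p_sum fb cond_i by unfold_locales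
  show ?thesis using backward_coalescence_time[OF gg_adm] by blast
qed

end
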